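(* Let $n \ge 2$, $V=[1:n]$. Let $A$ be a deterministic adaptive algorithm (in the learning model described in the context, with no restriction on intervention sizes) such that for every total ordering $\sigma$ of $V$, when the ground truth is $\vec{K}_n(\sigma)$, the sequence of interventions $\mathcal{I}$ designed by $A$ results in all edges of $K_n$ being oriented. Then there exists a total ordering $\sigma$ of $V$ such that the family $\mathcal{I}$ designed by $A$ on ground truth $\vec{K}_n(\sigma)$ is a separating system on $V$, i.e. for every pair of distinct $i,j \in V$ there exists $I \in \mathcal{I}$ containing exactly one of $i$ and $j$.
   Context: For a total ordering $\sigma$ of $V=[1:n]$, $\vec{K}_n(\sigma)$ is the DAG on the complete graph $K_n$ in which each edge $\{u,v\}$ is directed from the earlier to the later vertex in $\sigma$. Learning model: the learner maintains a partially directed graph, initially the undirected complete graph $K_n$ (the true DAG is unknown). Performing an intervention on a set $I \subseteq V$ does the following: (R0) every edge with exactly one endpoint in $I$ becomes oriented as in the true DAG; then the following Meek rules are applied repeatedly until no further edge can be oriented: (R1) orient $a-b$ as $a\to b$ if there is $c$ with $c\to a$ and $c,b$ non-adjacent; (R2) orient $a-b$ as $a\to b$ if there is $c$ with $a\to c$ and $c\to b$; (R3) orient $a-b$ as $a\to b$ if there are $c,d$ with $a-c$, $a-d$, $c\to b$, $d\to b$ and $c,d$ non-adjacent; (R4) orient $a-c$ as $a\to c$ if there are $b,d$ with $b\to c$, $a-d$, $a-b$, $d\to b$ and $c,d$ non-adjacent. A deterministic adaptive algorithm chooses the intervention $I_{m+1}$ as a deterministic function of the partially directed graph obtained after $I_1,\ldots,I_m$;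 $\mathcal{I}=\{I_1,I_2,\ldots\}$ is the resulting family of interventions. *)

theory Defs
  imports Main
begin

text \<open>A partially directed graph is given by its skeleton
  E (a symmetric irreflexive relation; an unordered edge {a,b} is present iff (a,b) \<in> E)
  together with the set D of oriented edges: (a,b) \<in> D means a \<rightarrow> b.\<close>

type_synonym vertex = nat
type_synonym edges = "(vertex \<times> vertex) set"

definition V :: "nat \<Rightarrow> vertex set" where
  "V n = {1..n}"

definition Kn :: "nat \<Rightarrow> edges" where
  "Kn n = {(a,b). a \<in> V n \<and> b \<in> V n \<and> a \<noteq> b}"

definition total_ordering :: "nat \<Rightarrow> vertex list \<Rightarrow> bool" where
  "total_ordering n \<sigma> \<longleftrightarrow> distinct \<sigma> \<and> set \<sigma> = V n"

definition dag_of :: "vertex list \<Rightarrow> edges" where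
  "dag_of \<sigma> = {(u,v). \<exists>i j. i < j \<and> j < length \<sigma> \<and> \<sigma> ! i = u \<and> \<sigma> ! j = v}"

definition undir :: "edges \<Rightarrow> edges \<Rightarrow> vertex \<Rightarrow> vertex \<Rightarrow> bool" where
  "undir E D a b \<longleftrightarrow> (a,b) \<in> E \<and> (a,b) \<notin> D \<and> (b,a) \<notin> D"

definition nonadj :: "edges \<Rightarrow> vertex \<Rightarrow> vertex \<Rightarrow> bool" where
  "nonadj E c d \<longleftrightarrow> c \<noteq> d \<and> (c,d) \<notin> E"

definition meek_R1 :: "edges \<Rightarrow> edges \<Rightarrow> vertex \<Rightarrow> vertex \<Rightarrow> bool" where
  "meek_R1 E D a b \<longleftrightarrow> undir E D a b \<and> (\<exists>c. (c,a) \<in> D \<and> nonadj E c b)"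

definition meek_R2 :: "edges \<Rightarrow> edges \<Rightarrow> vertex \<Rightarrow> vertex \<Rightarrow> bool" where
  "meek_R2 E D a b \<longleftrightarrow> undir E D a b \<and> (\<exists>c. (a,c) \<in> D \<and> (c,b) \<in> D)"

definition meek_R3 :: "edges \<Rightarrow> edges \<Rightarrow> vertex \<Rightarrow> vertex \<Rightarrow> bool" where
  "meek_R3 E D a b \<longleftrightarrow> undir E D a b \<and>
     (\<exists>c d. undir E D a c \<and> undir E D a d \<and> (c,b) \<in> D \<and> (d,b) \<in> D \<and> nonadj E c d)"

definition meek_R4 :: "edges \<Rightarrow> edges \<Rightarrow> vertex \<Rightarrow> vertex \<Rightarrow> bool" where
  "meek_R4 E D a c \<longleftrightarrow> undir E D a c \<and>
     (\<exists>b d. (b,c) \<in> D \<and> undir E D a d \<and> undir E D a b \<and> (d,b) \<in> D \<and> nonadj E c d)"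

definition meek_step :: "edges \<Rightarrow> edges \<Rightarrow> edges" where
  "meek_step E D = D \<union> {(a,b). meek_R1 E D a b \<or> meek_R2 E D a b \<or> meek_R3 E D a b \<or> meek_R4 E D a b}"

text \<open>Apply the rules repeatedly until nothing changes.  Every non-trivial round orients
  at least one new edge of the finite skeleton E, so card E rounds reach the fixpoint.\<close>
definition meek_closure :: "edges \<Rightarrow> edges \<Rightarrow> edges" where
  "meek_closure E D = (meek_step E ^^ card E) D"

text \<open>Intervening on I in the learner's graph (skeleton K_n) with true DAG K_n(sigma):
  R0, then Meek closure.\<close>
definition intervene :: "nat \<Rightarrow> vertex list \<Rightarrow> edges \<Rightarrow> vertex set \<Rightarrow> edges" where
  "intervene n \<sigma> D I = meek_closure (Kn n)
     (D \<union> {(u,v) \<in> dag_of \<sigma> \<inter> Kn n. (u \<in> I) \<noteq> (v \<in> I)})"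

text \<open>A deterministic adaptive algorithm is a function from the current partially directed
  graph (represented by its oriented edges; the skeleton is always K_n) to the next
  intervention.  run n alg sigma m is the learner's graph after the first m interventions.\<close>
primrec run :: "nat \<Rightarrow> (edges \<Rightarrow> vertex set) \<Rightarrow> vertex list \<Rightarrow> nat \<Rightarrow> edges" where
  "run n alg \<sigma> 0 = {}"
| "run n alg \<sigma> (Suc m) = intervene n \<sigma> (run n alg \<sigma> m) (alg (run n alg \<sigma> m))"

definition fully_oriented :: "edges \<Rightarrow> edges \<Rightarrow> bool" where
  "fully_oriented E D \<longleftrightarrow> (\<forall>(a,b) \<in> E. (a,b) \<in> D \<or> (b,a) \<in> D)"

definition num_interventions :: "nat \<Rightarrow> (edges \<Rightarrow> vertex set) \<Rightarrow> vertex list \<Rightarrow> nat" where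
  "num_interventions n alg \<sigma> = (LEAST m. fully_oriented (Kn n) (run n alg \<sigma> m))"

definition interventions :: "nat \<Rightarrow> (edges \<Rightarrow> vertex set) \<Rightarrow> vertex list \<Rightarrow> vertex set set" where
  "interventions n alg \<sigma> = {alg (run n alg \<sigma> m) | m. m < num_interventions n alg \<sigma>}"

definition separating_system :: "vertex set \<Rightarrow> vertex set set \<Rightarrow> bool" where
  "separating_system S \<I> \<longleftrightarrow>
     (\<forall>i \<in> S. \<forall>j \<in> S. i \<noteq> j \<longrightarrow> (\<exists>I \<in> \<I>. (i \<in> I \<and> j \<notin> I) \<or> (j \<in> I \<and> i \<notin> I)))"

end

theory Submission
  imports Defs "HOL-Library.Product_Lexorder"
begin

text \<open>An adversary keeps the ground truth undecided.  It maintains an ordering in which every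
  class of vertices not yet separated by the interventions is an interval.  After each
  intervention it reorders every class so that the intervened vertices come first; this keeps
  all edges between classes, hence everything the learner has seen so far.  On a complete
  skeleton only R2 can fire, and with interval classes R2 composes edges between classes into
  edges between classes.  So an edge is oriented only once its endpoints are separated, and
  full orientation forces the interventions to form a separating system.\<close>

definition position :: "vertex list \<Rightarrow> vertex \<Rightarrow> nat" where
  "position \<sigma> v = (THE i. i < length \<sigma> \<and> \<sigma> ! i = v)"

lemma position_nth: "distinct \<sigma> \<Longrightarrow> i < length \<sigma> \<Longrightarrow> position \<sigma> (\<sigma> ! i) = i"
  unfolding position_def by (rule the_equality) (auto simp: nth_eq_iff_index_eq)

lemma nth_position:
  "distinct \<sigma> \<Longrightarrow> v \<in> set \<sigma> \<Longrightarrow> position \<sigma> v < length \<sigma> \<and> \<sigma> ! position \<sigma> v = v"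
  unfolding position_def by (rule theI') (rule distinct_Ex1)

definition key_order :: "vertex set \<Rightarrow> (vertex \<Rightarrow> 'a::linorder) \<Rightarrow> edges" where
  "key_order A g = {(u, v). u \<in> A \<and> v \<in> A \<and> g u < g v}"

lemma trans_key_order: "trans (key_order A g)"
  by (auto simp: key_order_def trans_def)

lemma dag_of_eq_key_order:
  assumes "distinct \<sigma>"
  shows "dag_of \<sigma> = key_order (set \<sigma>) (position \<sigma>)"
proof (intro equalityI subsetI)
  fix x assume "x \<in> dag_of \<sigma>"
  then show "x \<in> key_order (set \<sigma>) (position \<sigma>)"
    using assms by (auto simp: dag_of_def key_order_def position_nth)
next
  fix x assume "x \<in> key_order (set \<sigma>) (position \<sigma>)"
  then obtain u v where "x = (u, v)" "u \<in> set \<sigma>" "v \<in> set \<sigma>" "position \<sigma> u < position \<sigma> v"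
    by (auto simp: key_order_def)
  then show "x \<in> dag_of \<sigma>"
    using nth_position[OF assms] unfolding dag_of_def by blast
qed

lemma dag_of_total_ordering:
  "total_ordering n \<sigma> \<Longrightarrow> dag_of \<sigma> = key_order (V n) (position \<sigma>)"
  by (simp add: total_ordering_def dag_of_eq_key_order)

lemma inj_on_position: "total_ordering n \<sigma> \<Longrightarrow> inj_on (position \<sigma>) (V n)"
  unfolding total_ordering_def by (metis inj_onI nth_position)

lemma total_ordering_sort_key: "total_ordering n (sort_key g [1..<Suc n])"
  by (auto simp: total_ordering_def V_def)

lemma dag_of_sort_key:
  assumes "inj_on g (V n)"
  shows "dag_of (sort_key g [1..<Suc n]) = key_order (V n) g"
proof -
  define \<tau> where "\<tau> = sort_key g [1..<Suc n]"
  have \<tau>: "total_ordering n \<tau>"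
    unfolding \<tau>_def by (rule total_ordering_sort_key)
  then have "distinct (map g \<tau>)"
    using assms by (simp add: total_ordering_def distinct_map)
  then have strict: "sorted_wrt (<) (map g \<tau>)"
    by (simp add: \<tau>_def strict_sorted_iff)
  have "position \<tau> u < position \<tau> v \<longleftrightarrow> g u < g v" if "u \<in> V n" "v \<in> V n" for u v
  proof -
    have "distinct \<tau>" "set \<tau> = V n"
      using \<tau> by (simp_all add: total_ordering_def)
    then have u: "position \<tau> u < length \<tau>" "\<tau> ! position \<tau> u = u"
      and v: "position \<tau> v < length \<tau>" "\<tau> ! position \<tau> v = v"
      using nth_position that by auto
    have "position \<tau> u < position \<tau> v \<Longrightarrow> g u < g v"
      using sorted_wrt_nth_less[OF strict, of "position \<tau> u" "position \<tau> v"] u v by simp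
    moreover have "position \<tau> v < position \<tau> u \<Longrightarrow> g v < g u"
      using sorted_wrt_nth_less[OF strict, of "position \<tau> v" "position \<tau> u"] u v by simp
    moreover have "position \<tau> u = position \<tau> v \<Longrightarrow> u = v"
      using u v by metis
    ultimately show ?thesis
      by (cases "position \<tau> u" "position \<tau> v" rule: linorder_cases) auto
  qed
  then show ?thesis
    using dag_of_total_ordering[OF \<tau>] by (auto simp: \<tau>_def key_order_def)
qed

lemma finite_total_orderings: "finite {\<sigma>. total_ordering n \<sigma>}"
proof -
  have "{\<sigma>. total_ordering n \<sigma>} \<subseteq> {xs. set xs \<subseteq> V n \<and> length xs \<le> n}"
    by (auto simp: total_ordering_def V_def dest: distinct_card)
  then show ?thesis
    using finite_lists_length_le[of "V n" n] by (auto simp: V_def intro: finite_subset)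
qed

text \<open>No two vertices of a complete skeleton are non-adjacent, so R1, R3 and R4 never fire.\<close>
lemma meek_step_Kn: "D \<subseteq> Kn n \<Longrightarrow> meek_step (Kn n) D \<subseteq> D \<union> (Kn n \<inter> D O D)"
  by (auto simp: meek_step_def meek_R1_def meek_R2_def meek_R3_def meek_R4_def
      undir_def nonadj_def Kn_def)

lemma meek_closure_Kn_subset:
  assumes "D \<subseteq> T \<inter> Kn n" and "trans T"
  shows "meek_closure (Kn n) D \<subseteq> T \<inter> Kn n"
proof -
  have "(meek_step (Kn n) ^^ k) D \<subseteq> T \<inter> Kn n" for k
  proof (induction k)
    case 0
    then show ?case using assms(1) by simp
  next
    case (Suc k)
    let ?D = "(meek_step (Kn n) ^^ k) D"
    have "?D O ?D \<subseteq> T"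
      using Suc \<open>trans T\<close> unfolding trans_def by blast
    with Suc show ?case
      using meek_step_Kn[of ?D n] by auto
  qed
  then show ?thesis by (simp add: meek_closure_def)
qed

text \<open>For an equivalence R and a strict total order S: every R-class is an S-interval.\<close>
definition order_convex :: "edges \<Rightarrow> (vertex \<Rightarrow> vertex \<Rightarrow> bool) \<Rightarrow> bool" where
  "order_convex S R \<longleftrightarrow> (\<forall>u w v. (u, w) \<in> S \<longrightarrow> (w, v) \<in> S \<longrightarrow> R u v \<longrightarrow> R u w)"

lemma trans_order_convex_complement:
  assumes "trans S" and "order_convex S R"
  shows "trans {(u, v) \<in> S. \<not> R u v}"
  using assms unfolding order_convex_def trans_def by blast

lemma order_convex_transfer:
  assumes convex: "order_convex S F" and "equivp F"
    and coarser: "\<And>u v. E u v \<Longrightarrow> F u v"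
    and agree: "\<And>u v. (u, v) \<in> S' \<Longrightarrow> \<not> E u v \<Longrightarrow> (u, v) \<in> S"
  shows "order_convex S' F"
  unfolding order_convex_def
proof (intro allI impI)
  fix u w v
  assume uw: "(u, w) \<in> S'" and wv: "(w, v) \<in> S'" and "F u v"
  show "F u w"
  proof (rule ccontr)
    assume "\<not> F u w"
    moreover have "\<not> F w v"
      using \<open>F u v\<close> \<open>\<not> F u w\<close> \<open>equivp F\<close> by (metis equivp_symp equivp_transp)
    ultimately have "(u, w) \<in> S" "(w, v) \<in> S"
      using uw wv coarser agree by blast+
    then show False
      using convex \<open>F u v\<close> \<open>\<not> F u w\<close> by (auto simp: order_convex_def)
  qed
qed

text \<open>Once the E-classes are g-intervals, this is the number of vertices before the class of v.\<close>
definition class_rank ::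
    "vertex set \<Rightarrow> (vertex \<Rightarrow> 'a::linorder) \<Rightarrow> (vertex \<Rightarrow> vertex \<Rightarrow> bool) \<Rightarrow> vertex \<Rightarrow> nat" where
  "class_rank A g E v = card {w \<in> A. g w < g v \<and> \<not> E w v}"

lemma class_rank_less:
  assumes "finite A" "u \<in> A" "v \<in> A" and convex: "order_convex (key_order A g) E"
    and "g u < g v" "\<not> E u v"
  shows "class_rank A g E u < class_rank A g E v"
proof -
  let ?before = "\<lambda>x. {w \<in> A. g w < g x \<and> \<not> E w x}"
  have "?before u \<subseteq> ?before v"
  proof
    fix w assume w: "w \<in> ?before u"
    have "\<not> E w v"
    proof
      assume "E w v"
      then have "E w u"
        using convex w assms(2,3,5) unfolding order_convex_def key_order_def by blast
      with w show False by simp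
    qed
    with w show "w \<in> ?before v"
      using \<open>g u < g v\<close> by auto
  qed
  moreover have "u \<in> ?before v" "u \<notin> ?before u"
    using assms by auto
  ultimately have "?before u \<subset> ?before v"
    by blast
  then show ?thesis
    unfolding class_rank_def using \<open>finite A\<close> by (simp add: psubset_card_mono)
qed

lemma class_rank_eq:
  assumes "u \<in> A" "w \<in> A" "E u w" and "inj_on g A" "equivp E"
    and convex: "order_convex (key_order A g) E"
  shows "class_rank A g E u = class_rank A g E w"
proof -
  have preceding: "{x \<in> A. g x < g u \<and> \<not> E x u} \<subseteq> {x \<in> A. g x < g w \<and> \<not> E x w}"
    if "u \<in> A" "w \<in> A" "E u w" for u w
  proof
    fix x assume "x \<in> {x \<in> A. g x < g u \<and> \<not> E x u}"
    then have x: "x \<in> A" "g x < g u" "\<not> E x u" by auto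
    have "\<not> E x w"
      using x(3) \<open>E u w\<close> \<open>equivp E\<close> by (meson equivp_symp equivp_transp)
    have "g x < g w"
    proof (rule ccontr)
      assume "\<not> g x < g w"
      moreover have "g x \<noteq> g w"
        using \<open>\<not> E x w\<close> \<open>equivp E\<close> \<open>inj_on g A\<close> x(1) that(2)
        by (metis equivp_reflp inj_onD)
      ultimately have "(w, x) \<in> key_order A g" "(x, u) \<in> key_order A g"
        using x that by (auto simp: key_order_def)
      moreover have "E w u"
        using \<open>E u w\<close> \<open>equivp E\<close> by (rule equivp_symp[rotated])
      ultimately have "E w x"
        using convex unfolding order_convex_def by blast
      then show False
        using \<open>\<not> E x w\<close> \<open>equivp E\<close> by (meson equivp_symp)
    qed
    with x \<open>\<not> E x w\<close> show "x \<in> {x \<in> A. g x < g w \<and> \<not> E x w}"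
      by simp
  qed
  have "E w u"
    using \<open>E u w\<close> \<open>equivp E\<close> by (rule equivp_symp[rotated])
  then have "{x \<in> A. g x < g u \<and> \<not> E x u} = {x \<in> A. g x < g w \<and> \<not> E x w}"
    using preceding assms(1-3) by (meson subset_antisym)
  then show ?thesis
    by (simp add: class_rank_def)
qed

text \<open>The adversary's reordering: classes keep their g-order, and inside each class the members
  of J come first.\<close>
definition refined_key ::
    "vertex set \<Rightarrow> (vertex \<Rightarrow> 'a::linorder) \<Rightarrow> (vertex \<Rightarrow> vertex \<Rightarrow> bool) \<Rightarrow> vertex set
     \<Rightarrow> vertex \<Rightarrow> nat \<times> bool \<times> 'a" where
  "refined_key A g E J v = (class_rank A g E v, v \<notin> J, g v)"

lemma inj_on_refined_key: "inj_on g A \<Longrightarrow> inj_on (refined_key A g E J) A"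
  by (auto simp: inj_on_def refined_key_def)

lemma refined_key_less_iff:
  assumes "finite A" "u \<in> A" "v \<in> A" "inj_on g A" "equivp E"
    and "order_convex (key_order A g) E" and "\<not> E u v"
  shows "refined_key A g E J u < refined_key A g E J v \<longleftrightarrow> g u < g v"
proof -
  have "\<not> E v u"
    using \<open>\<not> E u v\<close> \<open>equivp E\<close> by (metis equivp_symp)
  have "u \<noteq> v"
    using \<open>\<not> E u v\<close> \<open>equivp E\<close> by (metis equivp_reflp)
  then have "g u \<noteq> g v"
    using assms(2-4) by (meson inj_onD)
  show ?thesis
  proof (cases "g u < g v")
    case True
    then have "class_rank A g E u < class_rank A g E v"
      using class_rank_less assms by blast
    with True show ?thesis
      by (simp add: refined_key_def)
  next
    case False
    with \<open>g u \<noteq> g v\<close> have "class_rank A g E v < class_rank A g E u"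
      using class_rank_less assms \<open>\<not> E v u\<close> by (metis linorder_neqE)
    with False show ?thesis
      by (simp add: refined_key_def)
  qed
qed

lemma order_convex_refined_key:
  assumes "finite A" "inj_on g A" "equivp E" and convex: "order_convex (key_order A g) E"
  shows "order_convex (key_order A (refined_key A g E J)) (\<lambda>u v. E u v \<and> (u \<in> J \<longleftrightarrow> v \<in> J))"
  unfolding order_convex_def
proof (intro allI impI, elim conjE)
  let ?g' = "refined_key A g E J"
  fix u w v
  assume uw: "(u, w) \<in> key_order A ?g'" and wv: "(w, v) \<in> key_order A ?g'"
    and "E u v" and J: "u \<in> J \<longleftrightarrow> v \<in> J"
  have "order_convex (key_order A ?g') E"
    using order_convex_transfer[OF convex \<open>equivp E\<close>, of E "key_order A ?g'"]
      refined_key_less_iff[OF \<open>finite A\<close> _ _ assms(2,3) convex]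
    by (auto simp: key_order_def)
  then have "E u w"
    using uw wv \<open>E u v\<close> unfolding order_convex_def by blast
  moreover have "E w v"
    using calculation \<open>E u v\<close> \<open>equivp E\<close> by (meson equivp_symp equivp_transp)
  ultimately have "class_rank A g E u = class_rank A g E w" "class_rank A g E w = class_rank A g E v"
    using uw wv class_rank_eq[OF _ _ _ assms(2,3) convex] by (auto simp: key_order_def)
  then have "(u \<notin> J) \<le> (w \<notin> J)" "(w \<notin> J) \<le> (v \<notin> J)"
    using uw wv by (auto simp: key_order_def refined_key_def)
  then show "E u w \<and> (u \<in> J \<longleftrightarrow> w \<in> J)"
    using \<open>E u w\<close> J by auto
qed

definition intervention :: "nat \<Rightarrow> (edges \<Rightarrow> vertex set) \<Rightarrow> vertex list \<Rightarrow> nat \<Rightarrow> vertex set" where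
  "intervention n alg \<sigma> k = alg (run n alg \<sigma> k)"

definition unseparated ::
    "nat \<Rightarrow> (edges \<Rightarrow> vertex set) \<Rightarrow> vertex list \<Rightarrow> nat \<Rightarrow> vertex \<Rightarrow> vertex \<Rightarrow> bool" where
  "unseparated n alg \<sigma> m u v \<longleftrightarrow>
     (\<forall>k<m. u \<in> intervention n alg \<sigma> k \<longleftrightarrow> v \<in> intervention n alg \<sigma> k)"

text \<open>Every earlier stage is included because the Meek closure after intervention k relies on
  the classes at stage k.\<close>
definition classes_convex :: "nat \<Rightarrow> (edges \<Rightarrow> vertex set) \<Rightarrow> vertex list \<Rightarrow> nat \<Rightarrow> bool" where
  "classes_convex n alg \<sigma> m \<longleftrightarrow> (\<forall>k\<le>m. order_convex (dag_of \<sigma>) (unseparated n alg \<sigma> k))"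

lemma equivp_unseparated: "equivp (unseparated n alg \<sigma> m)"
  by (rule equivpI) (auto simp: unseparated_def reflp_def symp_def transp_def)

lemma unseparated_Suc:
  "unseparated n alg \<sigma> (Suc m) u v \<longleftrightarrow>
     unseparated n alg \<sigma> m u v \<and> (u \<in> intervention n alg \<sigma> m \<longleftrightarrow> v \<in> intervention n alg \<sigma> m)"
  by (auto simp: unseparated_def less_Suc_eq)

lemma unseparated_antimono: "unseparated n alg \<sigma> m u v \<Longrightarrow> k \<le> m \<Longrightarrow> unseparated n alg \<sigma> k u v"
  by (auto simp: unseparated_def)

lemma run_eq_if_dag_of_agrees:
  assumes agree: "\<And>u v. \<not> unseparated n alg \<sigma> m u v \<Longrightarrow> (u, v) \<in> dag_of \<sigma> \<longleftrightarrow> (u, v) \<in> dag_of \<tau>"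
  shows "k \<le> m \<Longrightarrow> run n alg \<sigma> k = run n alg \<tau> k"
proof (induction k)
  case 0
  show ?case by simp
next
  case (Suc k)
  let ?I = "alg (run n alg \<sigma> k)"
  have "(u \<in> ?I) \<noteq> (v \<in> ?I) \<Longrightarrow> \<not> unseparated n alg \<sigma> m u v" for u v
    unfolding unseparated_def intervention_def using Suc.prems Suc_le_lessD by blast
  then have "{(u, v) \<in> dag_of \<sigma> \<inter> Kn n. (u \<in> ?I) \<noteq> (v \<in> ?I)}
           = {(u, v) \<in> dag_of \<tau> \<inter> Kn n. (u \<in> ?I) \<noteq> (v \<in> ?I)}"
    using agree by blast
  then show ?case
    using Suc by (simp add: intervene_def)
qed

lemma unseparated_eq_if_run_eq:
  "(\<And>k. k < m \<Longrightarrow> run n alg \<sigma> k = run n alg \<tau> k) \<Longrightarrow> unseparated n alg \<tau> m = unseparated n alg \<sigma> m"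
  by (auto simp: unseparated_def intervention_def fun_eq_iff)

lemma run_subset_separated:
  assumes "total_ordering n \<sigma>" and convex: "classes_convex n alg \<sigma> M"
  shows "k \<le> M \<Longrightarrow> run n alg \<sigma> k \<subseteq> {(u, v) \<in> dag_of \<sigma>. \<not> unseparated n alg \<sigma> k u v} \<inter> Kn n"
proof (induction k)
  case 0
  show ?case by simp
next
  case (Suc k)
  let ?T = "{(u, v) \<in> dag_of \<sigma>. \<not> unseparated n alg \<sigma> (Suc k) u v}"
  have old: "run n alg \<sigma> k \<subseteq> ?T \<inter> Kn n"
    using Suc unseparated_antimono[of n alg \<sigma> "Suc k" _ _ k] by auto
  have new: "{(u, v) \<in> dag_of \<sigma> \<inter> Kn n. (u \<in> alg (run n alg \<sigma> k)) \<noteq> (v \<in> alg (run n alg \<sigma> k))}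
      \<subseteq> ?T \<inter> Kn n"
    by (auto simp: unseparated_Suc intervention_def)
  have "trans ?T"
  proof (rule trans_order_convex_complement)
    show "trans (dag_of \<sigma>)"
      using dag_of_total_ordering[OF assms(1)] trans_key_order by simp
    show "order_convex (dag_of \<sigma>) (unseparated n alg \<sigma> (Suc k))"
      using convex Suc.prems by (simp add: classes_convex_def)
  qed
  then show ?case
    unfolding run.simps intervene_def by (rule meek_closure_Kn_subset[OF Un_least[OF old new]])
qed

lemma classes_convex_Suc:
  assumes \<sigma>: "total_ordering n \<sigma>" and convex: "classes_convex n alg \<sigma> m"
  shows "\<exists>\<tau>. total_ordering n \<tau> \<and> classes_convex n alg \<tau> (Suc m)"
proof -
  define g where "g = position \<sigma>"
  define E where "E = unseparated n alg \<sigma> m"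
  define J where "J = intervention n alg \<sigma> m"
  define \<tau> where "\<tau> = sort_key (refined_key (V n) g E J) [1..<Suc n]"
  have fin: "finite (V n)" by (simp add: V_def)
  have inj: "inj_on g (V n)" using inj_on_position[OF \<sigma>] by (simp add: g_def)
  have dag_\<sigma>: "dag_of \<sigma> = key_order (V n) g"
    using dag_of_total_ordering[OF \<sigma>] by (simp add: g_def)
  have dag_\<tau>: "dag_of \<tau> = key_order (V n) (refined_key (V n) g E J)"
    using dag_of_sort_key[OF inj_on_refined_key[OF inj]] by (simp add: \<tau>_def)
  have "equivp E" by (simp add: E_def equivp_unseparated)
  have convex_E: "order_convex (key_order (V n) g) E"
    using convex dag_\<sigma> by (simp add: classes_convex_def E_def)
  have agree: "(u, v) \<in> dag_of \<sigma> \<longleftrightarrow> (u, v) \<in> dag_of \<tau>" if "\<not> E u v" for u v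
    using refined_key_less_iff[OF fin _ _ inj \<open>equivp E\<close> convex_E that]
    by (auto simp: dag_\<sigma> dag_\<tau> key_order_def)
  have same_history: "unseparated n alg \<tau> k = unseparated n alg \<sigma> k" if "k \<le> Suc m" for k
    using that run_eq_if_dag_of_agrees[of n alg \<sigma> m \<tau>] agree
    by (intro unseparated_eq_if_run_eq) (simp add: E_def)
  have "order_convex (dag_of \<tau>) (unseparated n alg \<sigma> k)" if "k \<le> Suc m" for k
  proof (cases "k \<le> m")
    case True
    show ?thesis
    proof (rule order_convex_transfer[where E = E])
      show "order_convex (dag_of \<sigma>) (unseparated n alg \<sigma> k)"
        using convex True by (simp add: classes_convex_def)
      show "unseparated n alg \<sigma> k u v" if "E u v" for u v
        using that True unseparated_antimono by (simp add: E_def)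
      show "(u, v) \<in> dag_of \<sigma>" if "(u, v) \<in> dag_of \<tau>" "\<not> E u v" for u v
        using agree that by blast
    qed (rule equivp_unseparated)
  next
    case False
    with that have "k = Suc m" by simp
    then have "unseparated n alg \<sigma> k = (\<lambda>u v. E u v \<and> (u \<in> J \<longleftrightarrow> v \<in> J))"
      by (simp add: fun_eq_iff unseparated_Suc E_def J_def)
    then show ?thesis
      using order_convex_refined_key[OF fin inj \<open>equivp E\<close> convex_E] dag_\<tau> by simp
  qed
  then have "classes_convex n alg \<tau> (Suc m)"
    using same_history by (simp add: classes_convex_def)
  then show ?thesis
    using total_ordering_sort_key \<tau>_def by blast
qed

lemma exists_classes_convex: "\<exists>\<sigma>. total_ordering n \<sigma> \<and> classes_convex n alg \<sigma> m"
proof (induction m)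
  case 0
  have "total_ordering n [1..<Suc n]"
    by (auto simp: total_ordering_def V_def)
  moreover have "classes_convex n alg [1..<Suc n] 0"
    by (simp add: classes_convex_def order_convex_def unseparated_def)
  ultimately show ?case by blast
next
  case (Suc m)
  then show ?case using classes_convex_Suc by blast
qed

lemma separating_system_if_fully_oriented:
  assumes "total_ordering n \<sigma>" "classes_convex n alg \<sigma> N" "M \<le> N"
    and "fully_oriented (Kn n) (run n alg \<sigma> M)"
  shows "separating_system (V n) {intervention n alg \<sigma> k | k. k < M}"
  unfolding separating_system_def
proof (intro ballI impI)
  fix i j assume "i \<in> V n" "j \<in> V n" "i \<noteq> j"
  then have "(i, j) \<in> run n alg \<sigma> M \<or> (j, i) \<in> run n alg \<sigma> M"
    using assms(4) by (auto simp: fully_oriented_def Kn_def)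
  then have "\<not> unseparated n alg \<sigma> M i j"
    using run_subset_separated[OF assms(1,2,3)] equivp_symp[OF equivp_unseparated] by blast
  then show "\<exists>I \<in> {intervention n alg \<sigma> k | k. k < M}. i \<in> I \<and> j \<notin> I \<or> j \<in> I \<and> i \<notin> I"
    unfolding unseparated_def by blast
qed

theorem theorem2:
  fixes n :: nat and alg :: "edges \<Rightarrow> vertex set"
  assumes "n \<ge> 2"
    and "\<forall>\<sigma>. total_ordering n \<sigma> \<longrightarrow> (\<exists>m. fully_oriented (Kn n) (run n alg \<sigma> m))"
  shows "\<exists>\<sigma>. total_ordering n \<sigma> \<and> separating_system (V n) (interventions n alg \<sigma>)"
proof -
  define N where "N = Max (num_interventions n alg ` {\<sigma>. total_ordering n \<sigma>})"
  obtain \<sigma> where \<sigma>: "total_ordering n \<sigma>" and convex: "classes_convex n alg \<sigma> N"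
    using exists_classes_convex by blast
  have "num_interventions n alg \<sigma> \<le> N"
    using finite_total_orderings \<sigma> by (simp add: N_def)
  moreover have "fully_oriented (Kn n) (run n alg \<sigma> (num_interventions n alg \<sigma>))"
    using assms(2) \<sigma> unfolding num_interventions_def by (metis LeastI_ex)
  ultimately have "separating_system (V n) (interventions n alg \<sigma>)"
    using separating_system_if_fully_oriented[OF \<sigma> convex]
    by (simp add: interventions_def intervention_def)
  then show ?thesis using \<sigma> by blast
qed

end
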